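(* There exist universal constants $c_1,c,p>0$ such that the following holds. Let $H\ge2$, $A\ge2$, $0<\epsilon<\frac1{48\sqrt8}$ and $S\ge c_1$. Then for any algorithm and any $n\le cH^2SA/\epsilon^2$, there exists a non-stationary $H$-horizon tabular MDP with $S$ states and $A$ actions such that, when the algorithm uses $n$ episodes of data from this MDP, with probability at least $p$ it outputs a policy $\widehat\pi$ with $v^\star-v^{\widehat\pi}\ge\epsilon$.
   Context: A finite-horizon tabular MDP has finite state/action sets, horizon $H$, rewards in $[0,1]$, transition kernels $P_t$, initial distribution $d_1$. For a policy $\pi$, $v^\pi=\mathbb E^\pi[\sum_{t=1}^Hr_t]$ with $s_1\sim d_1$, and $v^\star=\sup_\pi v^\pi$. The algorithm may collect its $n$ episodes with any data-collection strategy. *)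

theory Defs
  imports "HOL-Probability.Probability"
begin

text \<open>States are 0..S-1, actions 0..A-1, time steps
  are indexed 0..H-1 (corresponding to 1..H in the paper).\<close>

record mdp =
  init :: "nat pmf"
  trans :: "nat \<Rightarrow> nat \<Rightarrow> nat \<Rightarrow> nat pmf"
  rew :: "nat \<Rightarrow> nat \<Rightarrow> nat \<Rightarrow> real pmf"

definition valid_mdp :: "nat \<Rightarrow> nat \<Rightarrow> nat \<Rightarrow> mdp \<Rightarrow> bool" where
  "valid_mdp S A H M \<longleftrightarrow>
     set_pmf (init M) \<subseteq> {..<S} \<and>
     (\<forall>t<H. \<forall>s<S. \<forall>a<A. set_pmf (trans M t s a) \<subseteq> {..<S}
                      \<and> set_pmf (rew M t s a) \<subseteq> {0..1})"

text \<open>A step of a trajectory: (state, action, observed reward).\<close>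
type_synonym traj = "(nat \<times> nat \<times> real) list"

text \<open>Non-stationary (Markov, possibly randomized) policy: time, state to action distribution.\<close>
type_synonym policy = "nat \<Rightarrow> nat \<Rightarrow> nat pmf"

definition valid_policy :: "nat \<Rightarrow> nat \<Rightarrow> policy \<Rightarrow> bool" where
  "valid_policy A H \<pi> \<longleftrightarrow> (\<forall>t<H. \<forall>s. set_pmf (\<pi> t s) \<subseteq> {..<A})"

primrec run_steps ::
  "mdp \<Rightarrow> (traj \<Rightarrow> nat \<Rightarrow> nat \<Rightarrow> nat pmf) \<Rightarrow> nat \<Rightarrow> nat \<Rightarrow> nat \<Rightarrow> traj \<Rightarrow> traj pmf" where
  "run_steps M act t 0 s tr = return_pmf tr"
| "run_steps M act t (Suc k) s tr =
     do { a \<leftarrow> act tr t s;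
          r \<leftarrow> rew M t s a;
          s' \<leftarrow> trans M t s a;
          run_steps M act (Suc t) k s' (tr @ [(s, a, r)]) }"

definition episode :: "mdp \<Rightarrow> nat \<Rightarrow> (traj \<Rightarrow> nat \<Rightarrow> nat \<Rightarrow> nat pmf) \<Rightarrow> traj pmf" where
  "episode M H act = do { s \<leftarrow> init M; run_steps M act 0 H s [] }"

definition total_reward :: "traj \<Rightarrow> real" where
  "total_reward tr = sum_list (map (\<lambda>(s, a, r). r) tr)"

definition pol_value :: "mdp \<Rightarrow> nat \<Rightarrow> policy \<Rightarrow> real" where
  "pol_value M H \<pi> = measure_pmf.expectation (episode M H (\<lambda>tr t s. \<pi> t s)) total_reward"

definition vstar :: "mdp \<Rightarrow> nat \<Rightarrow> nat \<Rightarrow> real" where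
  "vstar M A H = (SUP \<pi> \<in> {\<pi>. valid_policy A H \<pi>}. pol_value M H \<pi>)"

text \<open>An arbitrary (randomized, adaptive) algorithm: during data collection it
  chooses actions based on all previously completed episodes, the current partial
  trajectory, time and current state; after collecting data it outputs a
  (random) policy.\<close>
record algorithm =
  alg_act :: "traj list \<Rightarrow> traj \<Rightarrow> nat \<Rightarrow> nat \<Rightarrow> nat pmf"
  alg_out :: "traj list \<Rightarrow> policy pmf"

definition valid_alg :: "nat \<Rightarrow> nat \<Rightarrow> algorithm \<Rightarrow> bool" where
  "valid_alg A H alg \<longleftrightarrow>
     (\<forall>D tr t s. set_pmf (alg_act alg D tr t s) \<subseteq> {..<A}) \<and>
     (\<forall>D. \<forall>\<pi>\<in>set_pmf (alg_out alg D). valid_policy A H \<pi>)"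

primrec collect :: "mdp \<Rightarrow> nat \<Rightarrow> algorithm \<Rightarrow> nat \<Rightarrow> traj list pmf" where
  "collect M H alg 0 = return_pmf []"
| "collect M H alg (Suc k) =
     do { D \<leftarrow> collect M H alg k;
          tr \<leftarrow> episode M H (alg_act alg D);
          return_pmf (D @ [tr]) }"

definition alg_output :: "mdp \<Rightarrow> nat \<Rightarrow> algorithm \<Rightarrow> nat \<Rightarrow> policy pmf" where
  "alg_output M H alg n = collect M H alg n \<bind> alg_out alg"

end

theory Submission
  imports Defs
begin

text \<open>
  In the hard instances the initial state s is uniform on {2..<S}, and the first action a moves
  to the absorbing state 1, which pays reward 1 per step, with probability 1/2 + \<delta> if a is the
  planted action \<theta> s and with probability 1/2 otherwise; else it moves to the absorbing state 0,
  which pays nothing. With \<delta> = 4 \<epsilon> / (H - 1), a policy that plays the planted action with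
  average probability m has value (H - 1) (1/2 + \<delta> m), so it is \<epsilon>-suboptimal unless m \<ge> 3/4.

  Fix s and compare the data collected on the instance with \<theta> s = a with those collected on the
  instance in which s has no planted action. By the chain rule their relative entropy is KL(1/2, 1/2 + \<delta>) / (S - 2) \<le> 4 \<delta>^2 / (S - 2) per episode,
  weighted by the probability that the episode plays a at s; summed over a this is at most
  4 n \<delta>^2 / (S - 2). Bounding expectations by the Hellinger distance and using Cauchy-Schwarz over
  a, the output policy plays \<theta> s with probability at most 1/A + 2 sqrt (4 n \<delta>^2 / (A (S - 2)))
  \<le> 7/10 on average over a uniformly random \<theta>. Fixing a good \<theta>, Markov's inequality gives
  m < 3/4 with probability at least 1/15.
\<close>

section \<open>Finite distributions\<close>

lemma expectation_bind_pmf: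
  fixes f :: "'b \<Rightarrow> real"
  assumes f0: "\<And>y. 0 \<le> f y" and fB: "\<And>y. f y \<le> B"
  shows "measure_pmf.expectation (bind_pmf M N) f =
         measure_pmf.expectation M (\<lambda>x. measure_pmf.expectation (N x) f)"
proof -
  have intf: "integrable (measure_pmf P) f" for P :: "'b pmf"
    by (rule measure_pmf.integrable_const_bound[where B=B]) (use f0 fB in auto)
  have g0: "0 \<le> measure_pmf.expectation (N x) f" for x
    by (rule integral_nonneg_AE) (use f0 in auto)
  have gB: "measure_pmf.expectation (N x) f \<le> B" for x
    using integral_mono[OF intf _ fB, of "N x"] by simp
  have intg: "integrable (measure_pmf M) (\<lambda>x. measure_pmf.expectation (N x) f)"
    by (rule measure_pmf.integrable_const_bound[where B=B]) (use g0 gB in auto)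
  have "ennreal (measure_pmf.expectation (bind_pmf M N) f) = (\<integral>\<^sup>+y. f y \<partial>bind_pmf M N)"
    by (rule nn_integral_eq_integral[symmetric]) (use intf f0 in auto)
  also have "\<dots> = (\<integral>\<^sup>+x. \<integral>\<^sup>+y. f y \<partial>N x \<partial>M)" by simp
  also have "\<dots> = (\<integral>\<^sup>+x. ennreal (measure_pmf.expectation (N x) f) \<partial>M)"
    by (intro nn_integral_cong nn_integral_eq_integral) (use intf f0 in auto)
  also have "\<dots> = ennreal (measure_pmf.expectation M (\<lambda>x. measure_pmf.expectation (N x) f))"
    by (rule nn_integral_eq_integral) (use intg g0 in auto)
  finally show ?thesis
    by (subst (asm) ennreal_inj) (auto intro!: integral_nonneg_AE simp: f0 g0)
qed

lemma integrable_pmf_unit_interval: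
  fixes f :: "'a \<Rightarrow> real"
  assumes "\<And>x. 0 \<le> f x" "\<And>x. f x \<le> 1"
  shows "integrable (measure_pmf M) f"
  by (rule measure_pmf.integrable_const_bound[where B=1]) (use assms in auto)

lemma expectation_unit_interval:
  fixes f :: "'a \<Rightarrow> real"
  assumes "\<And>x. 0 \<le> f x" "\<And>x. f x \<le> 1"
  shows "0 \<le> measure_pmf.expectation M f" "measure_pmf.expectation M f \<le> 1"
proof -
  show "0 \<le> measure_pmf.expectation M f"
    by (rule integral_nonneg_AE) (use assms in auto)
  have "measure_pmf.expectation M f \<le> measure_pmf.expectation M (\<lambda>_. 1)"
    by (rule integral_mono) (use assms in \<open>auto intro: integrable_pmf_unit_interval\<close>)
  then show "measure_pmf.expectation M f \<le> 1" by simp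
qed

lemma sum_pmf_le_1: "(\<Sum>x\<in>X. pmf M x) \<le> 1"
proof (cases "finite X")
  case True
  then show ?thesis
    using measure_measure_pmf_finite[OF True, of M] measure_pmf.prob_le_1[of M X] by simp
qed simp

lemma sum_expectation_pmf_le_1:
  fixes P :: "'a \<Rightarrow> 'b pmf"
  shows "(\<Sum>x\<in>X. measure_pmf.expectation Q (\<lambda>y. pmf (P y) x)) \<le> 1"
proof (cases "finite X")
  case True
  have "(\<Sum>x\<in>X. measure_pmf.expectation Q (\<lambda>y. pmf (P y) x)) =
        measure_pmf.expectation Q (\<lambda>y. \<Sum>x\<in>X. pmf (P y) x)"
    by (rule Bochner_Integration.integral_sum[symmetric])
       (simp add: integrable_pmf_unit_interval pmf_le_1)
  also have "\<dots> \<le> 1"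
    by (rule expectation_unit_interval) (simp_all add: sum_nonneg sum_pmf_le_1)
  finally show ?thesis .
qed simp

lemma ex_in_set_pmf_le_expectation:
  fixes f :: "'a \<Rightarrow> real"
  assumes "finite (set_pmf M)"
  shows "\<exists>x\<in>set_pmf M. f x \<le> measure_pmf.expectation M f"
proof -
  define m where "m = Min (f ` set_pmf M)"
  have "m \<in> f ` set_pmf M"
    unfolding m_def using assms set_pmf_not_empty by (intro Min_in) auto
  moreover have "m \<le> measure_pmf.expectation M f"
    by (rule measure_pmf.integral_ge_const)
       (use assms in \<open>auto simp: m_def AE_measure_pmf_iff integrable_measure_pmf_finite\<close>)
  ultimately show ?thesis by auto
qed

lemma sum_sqrt_le_sqrt_card_mult_sum:
  assumes "finite I" "\<And>i. i \<in> I \<Longrightarrow> 0 \<le> x i"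
  shows "(\<Sum>i\<in>I. sqrt (x i)) \<le> sqrt (real (card I) * (\<Sum>i\<in>I. x i))"
proof -
  have "(\<Sum>i\<in>I. 1 * sqrt (x i))\<^sup>2 \<le> (\<Sum>i\<in>I. 1\<^sup>2) * (\<Sum>i\<in>I. (sqrt (x i))\<^sup>2)"
    by (rule Cauchy_Schwarz_ineq_sum)
  also have "\<dots> = real (card I) * (\<Sum>i\<in>I. x i)"
    using assms by simp
  finally show ?thesis by (intro real_le_rsqrt) simp
qed

lemma prob_less_ge_1_minus_expectation:
  fixes G :: "'a \<Rightarrow> real"
  assumes G0: "\<And>x. 0 \<le> G x" and G1: "\<And>x. G x \<le> 1" and c: "0 < c"
  shows "1 - measure_pmf.expectation M G / c \<le> measure_pmf.prob M {x. G x < c}"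
proof -
  have "measure_pmf.prob M {x. G x < c} = measure_pmf.prob M (space M - {x. c \<le> G x})"
    by (intro arg_cong[where f="measure_pmf.prob M"]) auto
  also have "\<dots> = 1 - measure_pmf.prob M {x. c \<le> G x}"
    by (rule measure_pmf.prob_compl) simp
  finally have "measure_pmf.prob M {x. G x < c} = 1 - measure_pmf.prob M {x. c \<le> G x}" .
  moreover have "measure_pmf.prob M {x. c \<le> G x} \<le> measure_pmf.expectation M G / c"
    using integral_Markov_inequality_measure[of "measure_pmf M" G UNIV c]
    by (simp add: c G0 integrable_pmf_unit_interval[OF G0 G1])
  ultimately show ?thesis by simp
qed

lemma pmf_bind_pmf_single_source:
  assumes "\<And>x'. x' \<in> set_pmf p \<Longrightarrow> x' \<noteq> x \<Longrightarrow> y \<notin> set_pmf (K x')"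
  shows "pmf (bind_pmf p K) y = pmf p x * pmf (K x) y"
proof -
  have "pmf (bind_pmf p K) y = measure_pmf.expectation p (\<lambda>x'. indicator {x} x' * pmf (K x) y)"
    unfolding pmf_bind
    by (rule integral_cong_AE)
       (use assms in \<open>auto simp: AE_measure_pmf_iff set_pmf_eq indicator_def\<close>)
  then show ?thesis
    by (simp add: measure_pmf_single)
qed

section \<open>Relative entropy\<close>

text \<open>Only meaningful when q has finite support contained in that of p.\<close>
definition kl_div :: "'a pmf \<Rightarrow> 'a pmf \<Rightarrow> real" where
  "kl_div q p = (\<Sum>x\<in>set_pmf q. pmf q x * ln (pmf q x / pmf p x))"

lemma kl_div_self [simp]: "kl_div p p = 0"
  unfolding kl_div_def by (intro sum.neutral) (auto simp: set_pmf_iff)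

text \<open>Chain rule: d recovers the first component from any outcome of the second one.\<close>
lemma kl_div_bind_pmf:
  assumes fin_q: "finite (set_pmf q)" and sub: "set_pmf q \<subseteq> set_pmf p"
    and finL: "\<And>x. x \<in> set_pmf q \<Longrightarrow> finite (set_pmf (L x))"
    and subL: "\<And>x. x \<in> set_pmf q \<Longrightarrow> set_pmf (L x) \<subseteq> set_pmf (K x)"
    and dec: "\<And>x y. x \<in> set_pmf p \<Longrightarrow> y \<in> set_pmf (K x) \<Longrightarrow> d y = x"
  shows "kl_div (bind_pmf q L) (bind_pmf p K) =
         kl_div q p + (\<Sum>x\<in>set_pmf q. pmf q x * kl_div (L x) (K x))"
proof -
  let ?F = "\<lambda>y. pmf (bind_pmf q L) y * ln (pmf (bind_pmf q L) y / pmf (bind_pmf p K) y)"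
  have decL: "d y = x" if "x \<in> set_pmf q" "y \<in> set_pmf (L x)" for x y
    using dec[of x y] that sub subL by auto
  have pq: "pmf (bind_pmf q L) y = pmf q x * pmf (L x) y"
    if "x \<in> set_pmf q" "y \<in> set_pmf (L x)" for x y
    by (rule pmf_bind_pmf_single_source) (use decL that in metis)
  have pp: "pmf (bind_pmf p K) y = pmf p x * pmf (K x) y"
    if "x \<in> set_pmf q" "y \<in> set_pmf (L x)" for x y
    by (rule pmf_bind_pmf_single_source) (use dec that sub subL in \<open>metis subsetD\<close>)
  have inner_sum: "sum ?F (set_pmf (L x)) =
      pmf q x * ln (pmf q x / pmf p x) + pmf q x * kl_div (L x) (K x)"
    if x: "x \<in> set_pmf q" for x
  proof -
    have qx: "0 < pmf q x" and px: "0 < pmf p x"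
      using x sub by (auto simp: pmf_positive)
    have "?F y = pmf (L x) y * (pmf q x * ln (pmf q x / pmf p x))
                 + pmf q x * (pmf (L x) y * ln (pmf (L x) y / pmf (K x) y))"
      if y: "y \<in> set_pmf (L x)" for y
    proof -
      have "0 < pmf (L x) y" "0 < pmf (K x) y"
        using y subL[OF x] by (auto simp: pmf_positive)
      then have "ln (pmf q x * pmf (L x) y / (pmf p x * pmf (K x) y)) =
                 ln (pmf q x / pmf p x) + ln (pmf (L x) y / pmf (K x) y)"
        using qx px by (simp add: ln_mult ln_div)
      then show ?thesis
        using pq[OF x y] pp[OF x y] by (simp add: algebra_simps)
    qed
    then have "sum ?F (set_pmf (L x)) =
        (\<Sum>y\<in>set_pmf (L x). pmf (L x) y) * (pmf q x * ln (pmf q x / pmf p x))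
        + pmf q x * kl_div (L x) (K x)"
      by (simp add: sum.distrib sum_distrib_left sum_distrib_right kl_div_def)
    also have "(\<Sum>y\<in>set_pmf (L x). pmf (L x) y) = 1"
      by (rule sum_pmf_eq_1) (use finL x in auto)
    finally show ?thesis by simp
  qed
  have "kl_div (bind_pmf q L) (bind_pmf p K) = sum ?F (\<Union>x\<in>set_pmf q. set_pmf (L x))"
    unfolding kl_div_def by simp
  also have "\<dots> = (\<Sum>x\<in>set_pmf q. sum ?F (set_pmf (L x)))"
    by (rule sum.UNION_disjoint) (use fin_q finL decL in \<open>auto; metis\<close>)+
  also have "\<dots> = kl_div q p + (\<Sum>x\<in>set_pmf q. pmf q x * kl_div (L x) (K x))"
    by (simp add: inner_sum sum.distrib kl_div_def)
  finally show ?thesis .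
qed

lemma kl_div_map_pmf_inj:
  assumes "inj f" "finite (set_pmf q)" "set_pmf q \<subseteq> set_pmf p"
  shows "kl_div (map_pmf f q) (map_pmf f p) = kl_div q p"
  unfolding map_pmf_def
  by (subst kl_div_bind_pmf[where d="inv f"]) (use assms in auto)

lemma mult_ln_div_lower_bound:
  fixes p q :: real
  assumes "0 < p" "0 \<le> q"
  shows "2 * q - 2 * (sqrt p * sqrt q) \<le> q * ln (q / p)"
proof (cases "q = 0")
  case False
  define u v where "u = sqrt p" and "v = sqrt q"
  have u: "0 < u" and v: "0 < v" and pu: "p = u\<^sup>2" and qv: "q = v\<^sup>2"
    using assms False by (auto simp: u_def v_def)
  have "ln (q / p) = - 2 * ln (u / v)"
    using u v by (simp add: pu qv ln_div power2_eq_square ln_mult)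
  moreover have "ln (u / v) \<le> u / v - 1"
    by (rule ln_le_minus_one) (use u v in simp)
  ultimately have "q * (- 2 * (u / v - 1)) \<le> q * ln (q / p)"
    by (intro mult_left_mono) (auto simp: qv)
  also have "q * (- 2 * (u / v - 1)) = 2 * q - 2 * (u * v)"
    using v by (simp add: qv field_simps power2_eq_square)
  finally show ?thesis by (simp add: u_def v_def)
qed simp

lemma hellinger_le_kl_div:
  assumes fin: "finite (set_pmf p)" and sub: "set_pmf q \<subseteq> set_pmf p"
  shows "(\<Sum>x\<in>set_pmf p. (sqrt (pmf p x) - sqrt (pmf q x))\<^sup>2) \<le> kl_div q p"
proof -
  have sp: "(\<Sum>x\<in>set_pmf p. pmf p x) = 1" and sq: "(\<Sum>x\<in>set_pmf p. pmf q x) = 1"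
    by (rule sum_pmf_eq_1; use fin sub in simp)+
  have "(\<Sum>x\<in>set_pmf p. (sqrt (pmf p x) - sqrt (pmf q x))\<^sup>2) =
        (\<Sum>x\<in>set_pmf p. 2 * pmf q x - 2 * (sqrt (pmf p x) * sqrt (pmf q x)))"
    by (simp add: power2_diff sum.distrib sum_subtractf sp sq sum_distrib_left[symmetric] mult.assoc)
  also have "\<dots> \<le> (\<Sum>x\<in>set_pmf p. pmf q x * ln (pmf q x / pmf p x))"
    by (intro sum_mono mult_ln_div_lower_bound) (auto simp: pmf_positive)
  also have "\<dots> = kl_div q p"
    unfolding kl_div_def
    by (rule sum.mono_neutral_right) (use fin sub in \<open>auto simp: set_pmf_iff\<close>)
  finally show ?thesis .
qed

lemma kl_div_nonneg:
  assumes "finite (set_pmf p)" "set_pmf q \<subseteq> set_pmf p"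
  shows "0 \<le> kl_div q p"
  by (rule order_trans[OF sum_nonneg hellinger_le_kl_div[OF assms]]) simp

lemma expectation_diff_le_hellinger:
  fixes f :: "'a \<Rightarrow> real"
  assumes fin: "finite (set_pmf p)" and sub: "set_pmf q \<subseteq> set_pmf p"
    and f0: "\<And>x. 0 \<le> f x" and f1: "\<And>x. f x \<le> 1"
  shows "measure_pmf.expectation p f - measure_pmf.expectation q f \<le>
         2 * sqrt (\<Sum>x\<in>set_pmf p. (sqrt (pmf p x) - sqrt (pmf q x))\<^sup>2)"
proof -
  let ?U = "set_pmf p"
  define a where "a x = \<bar>sqrt (pmf p x) - sqrt (pmf q x)\<bar>" for x
  define b where "b x = sqrt (pmf p x) + sqrt (pmf q x)" for x
  have b_bound: "sqrt (\<Sum>x\<in>?U. (b x)\<^sup>2) \<le> 2"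
  proof -
    have "(b x)\<^sup>2 \<le> 2 * (pmf p x + pmf q x)" for x
      using sum_squares_bound[of "sqrt (pmf p x)" "sqrt (pmf q x)"]
      by (simp add: b_def power2_sum)
    moreover have "(\<Sum>x\<in>?U. pmf p x) = 1" "(\<Sum>x\<in>?U. pmf q x) = 1"
      by (rule sum_pmf_eq_1; use fin sub in simp)+
    ultimately have "(\<Sum>x\<in>?U. (b x)\<^sup>2) \<le> 4"
      using sum_mono[of ?U "\<lambda>x. (b x)\<^sup>2" "\<lambda>x. 2 * (pmf p x + pmf q x)"]
      by (simp add: sum.distrib sum_distrib_left[symmetric])
    then show ?thesis
      using real_sqrt_le_mono[of _ 4] by (simp add: real_sqrt_four)
  qed
  have "measure_pmf.expectation p f - measure_pmf.expectation q f =
        (\<Sum>x\<in>?U. f x * (pmf p x - pmf q x))"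
  proof -
    have "measure_pmf.expectation r f = (\<Sum>x\<in>?U. f x * pmf r x)" if "set_pmf r \<subseteq> ?U" for r
      by (rule integral_measure_pmf_real) (use fin that in auto)
    then show ?thesis
      using sub by (simp add: sum_subtractf[symmetric] algebra_simps)
  qed
  also have "\<dots> \<le> (\<Sum>x\<in>?U. a x * b x)"
  proof (rule sum_mono)
    fix x
    have "a x * b x = \<bar>(sqrt (pmf p x) - sqrt (pmf q x)) * (sqrt (pmf p x) + sqrt (pmf q x))\<bar>"
      by (simp add: a_def b_def abs_mult)
    also have "\<dots> = \<bar>pmf p x - pmf q x\<bar>"
      by (simp add: algebra_simps power2_eq_square[symmetric])
    finally have ab: "a x * b x = \<bar>pmf p x - pmf q x\<bar>" .
    have "f x * (pmf p x - pmf q x) \<le> f x * \<bar>pmf p x - pmf q x\<bar>"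
      by (rule mult_left_mono[OF abs_ge_self f0])
    also have "\<dots> \<le> \<bar>pmf p x - pmf q x\<bar>"
      by (rule mult_left_le_one_le) (simp_all add: f0 f1)
    finally show "f x * (pmf p x - pmf q x) \<le> a x * b x"
      by (simp add: ab)
  qed
  also have "\<dots> \<le> sqrt (\<Sum>x\<in>?U. (a x)\<^sup>2) * sqrt (\<Sum>x\<in>?U. (b x)\<^sup>2)"
    using Cauchy_Schwarz_ineq_sum[of a b ?U]
    by (simp add: real_le_rsqrt real_sqrt_mult[symmetric])
  also have "\<dots> \<le> sqrt (\<Sum>x\<in>?U. (a x)\<^sup>2) * 2"
    using b_bound by (intro mult_left_mono) (simp_all add: sum_nonneg)
  finally show ?thesis
    by (simp add: a_def mult.commute)
qed

lemma expectation_le_kl_div: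
  fixes f :: "'a \<Rightarrow> real"
  assumes "finite (set_pmf p)" "set_pmf q \<subseteq> set_pmf p" "\<And>x. 0 \<le> f x" "\<And>x. f x \<le> 1"
  shows "measure_pmf.expectation p f \<le> measure_pmf.expectation q f + 2 * sqrt (kl_div q p)"
  using expectation_diff_le_hellinger[of p q f, OF assms] hellinger_le_kl_div[OF assms(1,2)]
    real_sqrt_le_mono[of "\<Sum>x\<in>set_pmf p. (sqrt (pmf p x) - sqrt (pmf q x))\<^sup>2" "kl_div q p"]
  by linarith

section \<open>Biased coins\<close>

definition coin :: "real \<Rightarrow> nat pmf" where
  "coin \<beta> = map_pmf of_bool (bernoulli_pmf \<beta>)"

lemma set_pmf_coin_subset: "set_pmf (coin \<beta>) \<subseteq> {0, 1}"
  by (auto simp: coin_def)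

lemma set_pmf_coin: "0 < \<beta> \<Longrightarrow> \<beta> < 1 \<Longrightarrow> set_pmf (coin \<beta>) = {0, 1}"
  by (auto simp: coin_def)

lemma finite_set_pmf_coin [simp]: "finite (set_pmf (coin \<beta>))"
  using set_pmf_coin_subset by (rule finite_subset) simp

lemma pmf_coin:
  assumes "0 \<le> \<beta>" "\<beta> \<le> 1"
  shows "pmf (coin \<beta>) n = (if n = 0 then 1 - \<beta> else if n = 1 then \<beta> else 0)"
proof -
  have bern: "pmf (coin \<beta>) (of_bool b) = pmf (bernoulli_pmf \<beta>) b" for b
    unfolding coin_def by (rule pmf_map_inj') (simp add: inj_def)
  have "pmf (coin \<beta>) 0 = 1 - \<beta>" "pmf (coin \<beta>) 1 = \<beta>"
    using bern[of False] bern[of True] assms by simp_all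
  moreover have "pmf (coin \<beta>) n = 0" if "n \<notin> {0, 1}"
    using that set_pmf_coin_subset by (auto simp: set_pmf_eq)
  ultimately show ?thesis by auto
qed

lemma expectation_coin:
  assumes "0 \<le> \<beta>" "\<beta> \<le> 1"
  shows "measure_pmf.expectation (coin \<beta>) (\<lambda>s. of_bool (s = 1)) = \<beta>"
  using assms by (simp add: coin_def)

lemma kl_div_coin_half:
  assumes "0 \<le> \<delta>" "\<delta> < 1/2"
  shows "kl_div (coin (1/2)) (coin (1/2 + \<delta>)) = - ln (1 - 4 * \<delta>\<^sup>2) / 2"
proof -
  have "kl_div (coin (1/2)) (coin (1/2 + \<delta>)) = (ln (1 / (1 + 2 * \<delta>)) + ln (1 / (1 - 2 * \<delta>))) / 2"
    using assms by (simp add: kl_div_def set_pmf_coin pmf_coin)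
  also have "\<dots> = - ln ((1 + 2 * \<delta>) * (1 - 2 * \<delta>)) / 2"
    using assms by (simp add: ln_div ln_mult)
  finally show ?thesis
    by (simp add: algebra_simps power2_eq_square)
qed

lemma kl_div_coin_half_nonneg:
  "0 \<le> \<delta> \<Longrightarrow> \<delta> < 1/2 \<Longrightarrow> 0 \<le> kl_div (coin (1/2)) (coin (1/2 + \<delta>))"
  by (rule kl_div_nonneg) (simp_all add: set_pmf_coin)

lemma kl_div_coin_half_le:
  assumes "0 \<le> \<delta>" "\<delta> \<le> 1/4"
  shows "kl_div (coin (1/2)) (coin (1/2 + \<delta>)) \<le> 4 * \<delta>\<^sup>2"
proof -
  define y where "y = 4 * \<delta>\<^sup>2"
  have y: "0 \<le> y" "y \<le> 1/4"
    using assms power_mono[of \<delta> "1/4" 2] by (auto simp: y_def power2_eq_square)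
  have "- y - 2 * y\<^sup>2 \<le> ln (1 - y)"
    by (rule ln_one_minus_pos_lower_bound) (use y in auto)
  moreover have "y * (2 * y) \<le> y * (1/2)"
    by (rule mult_left_mono) (use y in auto)
  ultimately have "- ln (1 - y) / 2 \<le> y"
    unfolding power2_eq_square using y(1) by linarith
  then show ?thesis
    using assms by (simp add: kl_div_coin_half y_def)
qed

section \<open>Supports of collected data\<close>

definition same_supports :: "mdp \<Rightarrow> mdp \<Rightarrow> bool" where
  "same_supports M1 M2 \<longleftrightarrow> set_pmf (init M1) = set_pmf (init M2) \<and>
     (\<forall>t s a. set_pmf (trans M1 t s a) = set_pmf (trans M2 t s a) \<and>
              set_pmf (rew M1 t s a) = set_pmf (rew M2 t s a))"

definition finitely_supported :: "mdp \<Rightarrow> bool" where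
  "finitely_supported M \<longleftrightarrow> finite (set_pmf (init M)) \<and>
     (\<forall>t s a. finite (set_pmf (trans M t s a)) \<and> finite (set_pmf (rew M t s a)))"

lemma set_pmf_run_steps_cong:
  "same_supports M1 M2 \<Longrightarrow> set_pmf (run_steps M1 act t k s tr) = set_pmf (run_steps M2 act t k s tr)"
  by (induction k arbitrary: t s tr) (simp_all add: same_supports_def)

lemma set_pmf_episode_cong:
  assumes "same_supports M1 M2"
  shows "set_pmf (episode M1 H act) = set_pmf (episode M2 H act)"
  using assms set_pmf_run_steps_cong[OF assms] by (simp add: episode_def same_supports_def)

lemma set_pmf_collect_cong:
  "same_supports M1 M2 \<Longrightarrow> set_pmf (collect M1 H alg n) = set_pmf (collect M2 H alg n)"
  by (induction n) (simp_all add: set_pmf_episode_cong)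

lemma finite_set_pmf_run_steps:
  assumes "finitely_supported M" "\<And>tr t s. finite (set_pmf (act tr t s))"
  shows "finite (set_pmf (run_steps M act t k s tr))"
  using assms by (induction k arbitrary: t s tr) (simp_all add: finitely_supported_def)

lemma finite_set_pmf_episode:
  assumes "finitely_supported M" "\<And>tr t s. finite (set_pmf (act tr t s))"
  shows "finite (set_pmf (episode M H act))"
  using assms by (simp add: episode_def finite_set_pmf_run_steps finitely_supported_def)

lemma finite_set_pmf_collect:
  assumes "finitely_supported M" "\<And>D tr t s. finite (set_pmf (alg_act alg D tr t s))"
  shows "finite (set_pmf (collect M H alg n))"
  using assms by (induction n) (simp_all add: finite_set_pmf_episode)

lemma finite_set_pmf_alg_act:
  "valid_alg A H alg \<Longrightarrow> finite (set_pmf (alg_act alg D tr t s))"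
  unfolding valid_alg_def by (meson finite_lessThan finite_subset)

lemma run_steps_extends:
  "y \<in> set_pmf (run_steps M act t k s tr) \<Longrightarrow> \<exists>z. y = tr @ z"
  by (induction k arbitrary: t s tr) fastforce+

lemma kl_div_collect:
  assumes fin: "finitely_supported M1" and same: "same_supports M2 M1"
    and fa: "\<And>D tr t s. finite (set_pmf (alg_act alg D tr t s))"
  shows "kl_div (collect M2 H alg n) (collect M1 H alg n) =
    (\<Sum>k<n. measure_pmf.expectation (collect M2 H alg k)
       (\<lambda>D. kl_div (episode M2 H (alg_act alg D)) (episode M1 H (alg_act alg D))))"
proof (induction n)
  case (Suc k)
  let ?Q = "collect M2 H alg k"
  let ?f = "\<lambda>D. kl_div (episode M2 H (alg_act alg D)) (episode M1 H (alg_act alg D))"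
  have fin_coll: "finite (set_pmf (collect M H alg k))" if "M \<in> {M1, M2}" for M
    using finite_set_pmf_collect[OF fin fa] set_pmf_collect_cong[OF same] that by auto
  have fin_ep: "finite (set_pmf (episode M1 H (alg_act alg D)))" for D
    by (rule finite_set_pmf_episode[OF fin fa])
  have collect_Suc: "collect M H alg (Suc k) =
      collect M H alg k \<bind> (\<lambda>D. map_pmf (\<lambda>tr. D @ [tr]) (episode M H (alg_act alg D)))" for M
    by (simp add: map_pmf_def)
  have "kl_div (collect M2 H alg (Suc k)) (collect M1 H alg (Suc k)) =
        kl_div ?Q (collect M1 H alg k) + (\<Sum>D\<in>set_pmf ?Q. pmf ?Q D * ?f D)"
    unfolding collect_Suc
    by (subst kl_div_bind_pmf[where d=butlast],
        use fin_coll fin_ep set_pmf_collect_cong[OF same] set_pmf_episode_cong[OF same] in auto)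
       (intro sum.cong refl arg_cong2[where f="(*)"] kl_div_map_pmf_inj,
        use fin_ep set_pmf_episode_cong[OF same] in \<open>auto simp: inj_def\<close>)
  also have "(\<Sum>D\<in>set_pmf ?Q. pmf ?Q D * ?f D) = measure_pmf.expectation ?Q ?f"
    by (subst integral_measure_pmf_real[where A="set_pmf ?Q"]) (auto simp: fin_coll mult.commute)
  finally show ?case using Suc.IH by simp
qed simp

section \<open>The hard instances\<close>

definition hard_mdp :: "nat \<Rightarrow> (nat \<Rightarrow> nat \<Rightarrow> real) \<Rightarrow> mdp" where
  "hard_mdp S \<beta> = \<lparr>init = pmf_of_set {2..<S},
     trans = (\<lambda>t s a. if t = 0 \<and> 2 \<le> s then coin (\<beta> s a) else return_pmf s),
     rew = (\<lambda>t s a. return_pmf (of_bool (s = 1)))\<rparr>"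

lemma hard_mdp_simps [simp]:
  "init (hard_mdp S \<beta>) = pmf_of_set {2..<S}"
  "trans (hard_mdp S \<beta>) t s a = (if t = 0 \<and> 2 \<le> s then coin (\<beta> s a) else return_pmf s)"
  "rew (hard_mdp S \<beta>) t s a = return_pmf (of_bool (s = 1))"
  by (simp_all add: hard_mdp_def)

definition nondegenerate :: "(nat \<Rightarrow> nat \<Rightarrow> real) \<Rightarrow> bool" where
  "nondegenerate \<beta> \<longleftrightarrow> (\<forall>s a. 0 < \<beta> s a \<and> \<beta> s a < 1)"

lemma valid_mdp_hard_mdp: "2 < S \<Longrightarrow> valid_mdp S A H (hard_mdp S \<beta>)"
  using set_pmf_coin_subset by (fastforce simp: valid_mdp_def)

lemma finitely_supported_hard_mdp: "2 < S \<Longrightarrow> finitely_supported (hard_mdp S \<beta>)"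
  by (simp add: finitely_supported_def)

lemma same_supports_hard_mdp:
  "nondegenerate \<beta>1 \<Longrightarrow> nondegenerate \<beta>2 \<Longrightarrow> same_supports (hard_mdp S \<beta>1) (hard_mdp S \<beta>2)"
  by (simp add: same_supports_def nondegenerate_def set_pmf_coin)

lemma run_steps_hard_mdp_Suc:
  "run_steps (hard_mdp S \<beta>) act (Suc t) k s tr = run_steps (hard_mdp S \<beta>') act (Suc t) k s tr"
  by (induction k arbitrary: t s tr) simp_all

lemma total_reward_run_steps_hard_mdp:
  assumes "s \<in> {0, 1}" "y \<in> set_pmf (run_steps (hard_mdp S \<beta>) act (Suc t) k s tr)"
  shows "total_reward y = total_reward tr + real k * of_bool (s = 1)"
  using assms
  by (induction k arbitrary: t tr) (auto simp: total_reward_def algebra_simps)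

text \<open>An episode of length Suc k splits into the transition out of the initial state and a
  continuation that does not depend on the bias, fixed here to 1/2.\<close>

definition first_transition ::
  "nat \<Rightarrow> (nat \<Rightarrow> nat \<Rightarrow> real) \<Rightarrow> (traj \<Rightarrow> nat \<Rightarrow> nat \<Rightarrow> nat pmf) \<Rightarrow> (nat \<times> nat \<times> nat) pmf" where
  "first_transition S \<beta> act =
     pmf_of_set {2..<S} \<bind> (\<lambda>s. act [] 0 s \<bind> (\<lambda>a. map_pmf (\<lambda>s'. (s, a, s')) (coin (\<beta> s a))))"

definition continuation ::
  "nat \<Rightarrow> (traj \<Rightarrow> nat \<Rightarrow> nat \<Rightarrow> nat pmf) \<Rightarrow> nat \<Rightarrow> nat \<times> nat \<times> nat \<Rightarrow> traj pmf" where
  "continuation S act k =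
     (\<lambda>(s, a, s'). run_steps (hard_mdp S (\<lambda>_ _. 1/2)) act 1 k s' [(s, a, 0)])"

lemma episode_hard_mdp:
  assumes "2 < S"
  shows "episode (hard_mdp S \<beta>) (Suc k) act = first_transition S \<beta> act \<bind> continuation S act k"
proof -
  have "episode (hard_mdp S \<beta>) (Suc k) act = pmf_of_set {2..<S} \<bind>
      (\<lambda>s. act [] 0 s \<bind> (\<lambda>a. coin (\<beta> s a) \<bind> (\<lambda>s'. continuation S act k (s, a, s'))))"
    unfolding episode_def hard_mdp_simps(1)
    by (rule bind_pmf_cong[OF refl])
       (use assms in \<open>auto simp: continuation_def bind_return_pmf
          run_steps_hard_mdp_Suc[of S \<beta> _ 0 _ _ _ "\<lambda>_ _. 1/2", simplified]\<close>)
  then show ?thesis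
    by (simp add: first_transition_def bind_assoc_pmf bind_map_pmf)
qed

lemma kl_div_first_transition:
  assumes S: "2 < S" and \<beta>: "nondegenerate \<beta>1" "nondegenerate \<beta>2"
    and fa: "\<And>s. finite (set_pmf (act [] 0 s))"
  shows "kl_div (first_transition S \<beta>2 act) (first_transition S \<beta>1 act) =
    (\<Sum>s\<in>{2..<S}. \<Sum>a\<in>set_pmf (act [] 0 s).
       pmf (act [] 0 s) a * kl_div (coin (\<beta>2 s a)) (coin (\<beta>1 s a))) / real (S - 2)"
proof -
  let ?step = "\<lambda>\<beta> s. act [] 0 s \<bind> (\<lambda>a. map_pmf (\<lambda>s'. (s, a, s')) (coin (\<beta> s a)))"
  have coins: "set_pmf (coin (\<beta>1 s a)) = set_pmf (coin (\<beta>2 s a))" for s a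
    using \<beta> by (simp add: nondegenerate_def set_pmf_coin)
  have "kl_div (map_pmf (\<lambda>s'. (s, a, s')) (coin (\<beta>2 s a))) (map_pmf (\<lambda>s'. (s, a, s')) (coin (\<beta>1 s a)))
        = kl_div (coin (\<beta>2 s a)) (coin (\<beta>1 s a))" for s a
    by (rule kl_div_map_pmf_inj) (auto simp: inj_def coins)
  then have step: "kl_div (?step \<beta>2 s) (?step \<beta>1 s) =
      (\<Sum>a\<in>set_pmf (act [] 0 s). pmf (act [] 0 s) a * kl_div (coin (\<beta>2 s a)) (coin (\<beta>1 s a)))" for s
    by (subst kl_div_bind_pmf[where d="\<lambda>y. fst (snd y)"]) (auto simp: fa coins)
  have "kl_div (first_transition S \<beta>2 act) (first_transition S \<beta>1 act) =
      (\<Sum>s\<in>{2..<S}. kl_div (?step \<beta>2 s) (?step \<beta>1 s) / real (S - 2))"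
    unfolding first_transition_def
    by (subst kl_div_bind_pmf[where d=fst]) (use S in \<open>auto simp: fa coins\<close>)
  then show ?thesis
    by (simp add: step sum_divide_distrib)
qed

lemma kl_div_episode_hard_mdp:
  assumes S: "2 < S" and \<beta>: "nondegenerate \<beta>1" "nondegenerate \<beta>2"
    and fa: "\<And>tr t s. finite (set_pmf (act tr t s))" and k: "0 < k"
  shows "kl_div (episode (hard_mdp S \<beta>2) (Suc k) act) (episode (hard_mdp S \<beta>1) (Suc k) act) =
         kl_div (first_transition S \<beta>2 act) (first_transition S \<beta>1 act)"
proof -
  define d where "d y = (fst (y ! 0), fst (snd (y ! 0)), fst (y ! 1))" for y :: traj
  have decode: "d y = x" if "y \<in> set_pmf (continuation S act k x)" for x y
  proof -
    obtain s a s' where x: "x = (s, a, s')" by (cases x)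
    from k obtain k' where "k = Suc k'" by (cases k) auto
    with that show ?thesis
      by (auto simp: continuation_def x d_def dest!: run_steps_extends)
  qed
  have fin_first: "finite (set_pmf (first_transition S \<beta>2 act))"
    using S by (simp add: first_transition_def fa)
  have same_first: "set_pmf (first_transition S \<beta>2 act) \<subseteq> set_pmf (first_transition S \<beta>1 act)"
    using \<beta> by (simp add: first_transition_def nondegenerate_def set_pmf_coin)
  have fin_cont: "finite (set_pmf (continuation S act k x))" for x
    using S by (auto simp: continuation_def fa finitely_supported_hard_mdp
        intro!: finite_set_pmf_run_steps split: prod.splits)
  show ?thesis
    unfolding episode_hard_mdp[OF S]
    by (subst kl_div_bind_pmf[where d=d]) (use fin_first same_first fin_cont decode in auto)
qed

lemma pol_value_hard_mdp:
  assumes S: "2 < S" and \<beta>: "\<And>s a. 0 \<le> \<beta> s a \<and> \<beta> s a \<le> 1"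
  shows "pol_value (hard_mdp S \<beta>) (Suc k) \<pi> =
     real k * (\<Sum>s\<in>{2..<S}. measure_pmf.expectation (\<pi> 0 s) (\<beta> s)) / real (S - 2)"
proof -
  let ?act = "\<lambda>(tr::traj) t s. \<pi> t s"
  define h where "h x = real k * of_bool (snd (snd x) = 1)" for x :: "nat \<times> nat \<times> nat"
  have h: "0 \<le> h x" "h x \<le> real k" for x by (auto simp: h_def)
  have reward: "map_pmf total_reward (continuation S ?act k x) = return_pmf (h x)"
    if "x \<in> set_pmf (first_transition S \<beta> ?act)" for x
  proof -
    obtain s a s' where x: "x = (s, a, s')" by (cases x)
    have "s' \<in> {0, 1}"
      using that set_pmf_coin_subset by (auto simp: first_transition_def x)
    then have "total_reward y = h x" if "y \<in> set_pmf (continuation S ?act k x)" for y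
      using total_reward_run_steps_hard_mdp[of s' y] that
      by (auto simp: continuation_def x h_def total_reward_def)
    then show ?thesis
      by (simp add: map_pmf_cong[where g="\<lambda>_. h x"])
  qed
  have "pol_value (hard_mdp S \<beta>) (Suc k) \<pi> =
      measure_pmf.expectation (map_pmf total_reward (episode (hard_mdp S \<beta>) (Suc k) ?act)) id"
    by (simp add: pol_value_def)
  also have "map_pmf total_reward (episode (hard_mdp S \<beta>) (Suc k) ?act) =
      map_pmf h (first_transition S \<beta> ?act)"
    unfolding episode_hard_mdp[OF S] map_bind_pmf map_pmf_def[of h]
    by (rule bind_pmf_cong[OF refl reward])
  also have "measure_pmf.expectation \<dots> id = measure_pmf.expectation (pmf_of_set {2..<S})
      (\<lambda>s. measure_pmf.expectation (\<pi> 0 s)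
         (\<lambda>a. measure_pmf.expectation (coin (\<beta> s a)) (\<lambda>s'. h (s, a, s'))))"
    by (simp add: first_transition_def expectation_bind_pmf[OF h])
  also have "\<dots> = measure_pmf.expectation (pmf_of_set {2..<S})
      (\<lambda>s. measure_pmf.expectation (\<pi> 0 s) (\<lambda>a. real k * \<beta> s a))"
    using \<beta> expectation_coin by (simp add: h_def)
  also have "\<dots> = real k * (\<Sum>s\<in>{2..<S}. measure_pmf.expectation (\<pi> 0 s) (\<beta> s)) / real (S - 2)"
    using S by (simp add: integral_pmf_of_set sum_distrib_left)
  finally show ?thesis .
qed

definition planted_bias :: "real \<Rightarrow> (nat \<Rightarrow> nat) \<Rightarrow> nat \<Rightarrow> nat \<Rightarrow> real" where
  "planted_bias \<delta> \<theta> s a = 1/2 + (if a = \<theta> s then \<delta> else 0)"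

definition blanked_bias :: "real \<Rightarrow> (nat \<Rightarrow> nat) \<Rightarrow> nat \<Rightarrow> nat \<Rightarrow> nat \<Rightarrow> real" where
  "blanked_bias \<delta> \<theta> s0 s a = (if s = s0 then 1/2 else planted_bias \<delta> \<theta> s a)"

lemma nondegenerate_planted_bias: "0 \<le> \<delta> \<Longrightarrow> \<delta> < 1/2 \<Longrightarrow> nondegenerate (planted_bias \<delta> \<theta>)"
  by (auto simp: nondegenerate_def planted_bias_def)

lemma nondegenerate_blanked_bias: "0 \<le> \<delta> \<Longrightarrow> \<delta> < 1/2 \<Longrightarrow> nondegenerate (blanked_bias \<delta> \<theta> s0)"
  by (auto simp: nondegenerate_def planted_bias_def blanked_bias_def)

lemma kl_div_episode_blanked_planted:
  assumes S: "2 < S" and s0: "s0 \<in> {2..<S}" and \<delta>: "0 \<le> \<delta>" "\<delta> < 1/2"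
    and fa: "\<And>tr t s. finite (set_pmf (act tr t s))" and k: "0 < k"
  shows "kl_div (episode (hard_mdp S (blanked_bias \<delta> \<theta> s0)) (Suc k) act)
                (episode (hard_mdp S (planted_bias \<delta> (\<theta>(s0 := a0)))) (Suc k) act) =
         pmf (act [] 0 s0) a0 * kl_div (coin (1/2)) (coin (1/2 + \<delta>)) / real (S - 2)"
proof -
  let ?K = "kl_div (coin (1/2)) (coin (1/2 + \<delta>))"
  have coins: "kl_div (coin (blanked_bias \<delta> \<theta> s0 s a)) (coin (planted_bias \<delta> (\<theta>(s0 := a0)) s a)) =
      (if s = s0 \<and> a = a0 then ?K else 0)" for s a
    by (auto simp: blanked_bias_def planted_bias_def)
  have inner: "(\<Sum>a\<in>set_pmf (act [] 0 s). pmf (act [] 0 s) a * (if s = s0 \<and> a = a0 then ?K else 0)) =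
      (if s = s0 then pmf (act [] 0 s0) a0 * ?K else 0)" for s
    by (cases "a0 \<in> set_pmf (act [] 0 s0)") (auto simp: fa set_pmf_iff if_distrib cong: if_cong)
  show ?thesis
    unfolding kl_div_episode_hard_mdp[OF S nondegenerate_planted_bias[OF \<delta>]
        nondegenerate_blanked_bias[OF \<delta>] fa k]
      kl_div_first_transition[OF S nondegenerate_planted_bias[OF \<delta>]
        nondegenerate_blanked_bias[OF \<delta>] fa]
    using s0 by (simp add: coins inner)
qed

definition match_prob :: "nat \<Rightarrow> (nat \<Rightarrow> nat) \<Rightarrow> policy \<Rightarrow> real" where
  "match_prob S \<theta> \<pi> = (\<Sum>s\<in>{2..<S}. pmf (\<pi> 0 s) (\<theta> s)) / real (S - 2)"

lemma match_prob_nonneg: "0 \<le> match_prob S \<theta> \<pi>"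
  by (simp add: match_prob_def sum_nonneg)

lemma match_prob_le_1: "2 < S \<Longrightarrow> match_prob S \<theta> \<pi> \<le> 1"
  using sum_mono[of "{2..<S}" "\<lambda>s. pmf (\<pi> 0 s) (\<theta> s)" "\<lambda>_. 1"]
  by (simp add: match_prob_def pmf_le_1)

lemma pol_value_planted:
  assumes S: "2 < S" and \<delta>: "0 \<le> \<delta>" "\<delta> \<le> 1/2"
  shows "pol_value (hard_mdp S (planted_bias \<delta> \<theta>)) (Suc k) \<pi> = real k * (1/2 + \<delta> * match_prob S \<theta> \<pi>)"
proof -
  have bias: "0 \<le> planted_bias \<delta> \<theta> s a \<and> planted_bias \<delta> \<theta> s a \<le> 1" for s a
    using \<delta> by (simp add: planted_bias_def)
  have expectation: "measure_pmf.expectation (\<pi> 0 s) (planted_bias \<delta> \<theta> s) =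
      1/2 + \<delta> * pmf (\<pi> 0 s) (\<theta> s)" for s
  proof -
    have "planted_bias \<delta> \<theta> s = (\<lambda>a. 1/2 + \<delta> * indicator {\<theta> s} a)"
      by (auto simp: planted_bias_def indicator_def)
    moreover have "integrable (measure_pmf (\<pi> 0 s)) (\<lambda>a. \<delta> * indicator {\<theta> s} a :: real)"
      by (rule measure_pmf.integrable_const_bound[where B="\<bar>\<delta>\<bar>"]) (auto simp: indicator_def)
    ultimately show ?thesis
      by (simp add: measure_pmf_single Bochner_Integration.integral_add)
  qed
  have sum: "(\<Sum>s\<in>{2..<S}. 1/2 + \<delta> * pmf (\<pi> 0 s) (\<theta> s)) =
        real (S - 2) / 2 + \<delta> * (\<Sum>s\<in>{2..<S}. pmf (\<pi> 0 s) (\<theta> s))"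
    by (simp add: sum.distrib sum_distrib_left)
  have "0 < real (S - 2)" using S by simp
  then show ?thesis
    unfolding pol_value_hard_mdp[OF S bias] expectation sum match_prob_def
    by (simp add: field_simps)
qed

lemma suboptimality_planted:
  assumes S: "2 < S" and \<delta>: "0 \<le> \<delta>" "\<delta> \<le> 1/2" and A: "0 < A"
    and \<theta>: "\<And>s. s \<in> {2..<S} \<Longrightarrow> \<theta> s < A"
  shows "real k * \<delta> * (1 - match_prob S \<theta> \<pi>) \<le>
    vstar (hard_mdp S (planted_bias \<delta> \<theta>)) A (Suc k) - pol_value (hard_mdp S (planted_bias \<delta> \<theta>)) (Suc k) \<pi>"
proof -
  let ?M = "hard_mdp S (planted_bias \<delta> \<theta>)"
  define \<pi>\<^sub>\<theta> :: policy where "\<pi>\<^sub>\<theta> t s = return_pmf (if \<theta> s < A then \<theta> s else 0)" for t s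
  have valid: "valid_policy A (Suc k) \<pi>\<^sub>\<theta>"
    using A by (auto simp: valid_policy_def \<pi>\<^sub>\<theta>_def)
  have "match_prob S \<theta> \<pi>\<^sub>\<theta> = 1"
    using S \<theta> by (simp add: match_prob_def \<pi>\<^sub>\<theta>_def)
  moreover have "pol_value ?M (Suc k) \<pi>\<^sub>\<theta> \<le> vstar ?M A (Suc k)"
  proof -
    have "pol_value ?M (Suc k) \<pi>' \<le> real k * (1/2 + \<delta>)" for \<pi>'
      unfolding pol_value_planted[OF S \<delta>]
      using match_prob_le_1[OF S, of \<theta> \<pi>'] \<delta> by (intro mult_left_mono) (auto intro: mult_left_le)
    then show ?thesis
      unfolding vstar_def using valid by (intro cSUP_upper bdd_aboveI2) auto
  qed
  ultimately show ?thesis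
    by (simp add: pol_value_planted[OF S \<delta>] algebra_simps)
qed

section \<open>Finding the planted actions\<close>

definition pick_prob :: "algorithm \<Rightarrow> nat \<Rightarrow> nat \<Rightarrow> traj list \<Rightarrow> real" where
  "pick_prob alg s a D = measure_pmf.expectation (alg_out alg D) (\<lambda>\<pi>. pmf (\<pi> 0 s) a)"

lemma pick_prob_unit_interval: "0 \<le> pick_prob alg s a D" "pick_prob alg s a D \<le> 1"
  unfolding pick_prob_def by (rule expectation_unit_interval; simp add: pmf_le_1)+

lemma expectation_match_prob_alg_output:
  assumes "2 < S"
  shows "measure_pmf.expectation (alg_output M H alg n) (match_prob S \<theta>) =
    (\<Sum>s\<in>{2..<S}. measure_pmf.expectation (collect M H alg n) (pick_prob alg s (\<theta> s))) / real (S - 2)"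
proof -
  have "measure_pmf.expectation (alg_out alg D) (match_prob S \<theta>) =
        (\<Sum>s\<in>{2..<S}. pick_prob alg s (\<theta> s) D) / real (S - 2)" for D
    unfolding match_prob_def pick_prob_def
    by (simp add: Bochner_Integration.integral_sum[OF integrable_pmf_unit_interval] pmf_le_1)
  then show ?thesis
    unfolding alg_output_def
    by (simp add: expectation_bind_pmf[OF match_prob_nonneg match_prob_le_1[OF assms]]
        Bochner_Integration.integral_sum[OF integrable_pmf_unit_interval] pick_prob_unit_interval)
qed

lemma sum_kl_div_collect_blanked_planted:
  assumes alg: "valid_alg A (Suc k) alg" and S: "2 < S" and s: "s \<in> {2..<S}" and k: "0 < k"
    and \<delta>: "0 \<le> \<delta>" "\<delta> < 1/2"
  shows "(\<Sum>a<A. kl_div (collect (hard_mdp S (blanked_bias \<delta> \<theta> s)) (Suc k) alg n)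
                       (collect (hard_mdp S (planted_bias \<delta> (\<theta>(s := a)))) (Suc k) alg n))
         \<le> real n * kl_div (coin (1/2)) (coin (1/2 + \<delta>)) / real (S - 2)"
proof -
  let ?Q = "\<lambda>j. collect (hard_mdp S (blanked_bias \<delta> \<theta> s)) (Suc k) alg j"
  define c where "c = kl_div (coin (1/2)) (coin (1/2 + \<delta>)) / real (S - 2)"
  have c: "0 \<le> c"
    using kl_div_coin_half_nonneg[OF \<delta>] by (simp add: c_def)
  have "kl_div (?Q n) (collect (hard_mdp S (planted_bias \<delta> (\<theta>(s := a)))) (Suc k) alg n) =
        (\<Sum>j<n. c * measure_pmf.expectation (?Q j) (\<lambda>D. pmf (alg_act alg D [] 0 s) a))" for a
    by (simp add: kl_div_collect finitely_supported_hard_mdp[OF S] same_supports_hard_mdp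
          nondegenerate_planted_bias[OF \<delta>] nondegenerate_blanked_bias[OF \<delta>]
          finite_set_pmf_alg_act[OF alg] kl_div_episode_blanked_planted[OF S s \<delta> _ k] c_def mult_ac)
  then have "(\<Sum>a<A. kl_div (?Q n) (collect (hard_mdp S (planted_bias \<delta> (\<theta>(s := a)))) (Suc k) alg n)) =
        (\<Sum>j<n. c * (\<Sum>a<A. measure_pmf.expectation (?Q j) (\<lambda>D. pmf (alg_act alg D [] 0 s) a)))"
    by (simp add: sum.swap[of _ "{..<A}"] sum_distrib_left)
  also have "\<dots> \<le> (\<Sum>j<n. c)"
    by (intro sum_mono mult_right_le_one_le c sum_expectation_pmf_le_1 sum_nonneg integral_nonneg_AE) simp
  finally show ?thesis by (simp add: c_def)
qed

lemma sum_pick_prob_planted_le: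
  assumes alg: "valid_alg A (Suc k) alg" and S: "2 < S" and s: "s \<in> {2..<S}" and k: "0 < k"
    and \<delta>: "0 \<le> \<delta>" "\<delta> < 1/2"
  shows "(\<Sum>a<A. measure_pmf.expectation
            (collect (hard_mdp S (planted_bias \<delta> (\<theta>(s := a)))) (Suc k) alg n) (pick_prob alg s a))
         \<le> 1 + 2 * sqrt (real A * (real n * kl_div (coin (1/2)) (coin (1/2 + \<delta>)) / real (S - 2)))"
proof -
  let ?Q = "collect (hard_mdp S (blanked_bias \<delta> \<theta> s)) (Suc k) alg n"
  let ?P = "\<lambda>a. collect (hard_mdp S (planted_bias \<delta> (\<theta>(s := a)))) (Suc k) alg n"
  define kl where "kl a = kl_div ?Q (?P a)" for a
  have fin: "finite (set_pmf (?P a))" for a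
    by (rule finite_set_pmf_collect[OF finitely_supported_hard_mdp[OF S] finite_set_pmf_alg_act[OF alg]])
  have supp: "set_pmf ?Q \<subseteq> set_pmf (?P a)" for a
    using set_pmf_collect_cong[OF same_supports_hard_mdp[OF
        nondegenerate_blanked_bias[OF \<delta>] nondegenerate_planted_bias[OF \<delta>]]] by blast
  have "(\<Sum>a<A. measure_pmf.expectation (?P a) (pick_prob alg s a)) \<le>
        (\<Sum>a<A. measure_pmf.expectation ?Q (pick_prob alg s a) + 2 * sqrt (kl a))"
    unfolding kl_def
    by (intro sum_mono expectation_le_kl_div fin supp pick_prob_unit_interval)
  also have "\<dots> = (\<Sum>a<A. measure_pmf.expectation ?Q (pick_prob alg s a)) + 2 * (\<Sum>a<A. sqrt (kl a))"
    by (simp add: sum.distrib sum_distrib_left)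
  also have "(\<Sum>a<A. measure_pmf.expectation ?Q (pick_prob alg s a)) \<le> 1"
    unfolding pick_prob_def
    by (subst Bochner_Integration.integral_sum[symmetric])
       (auto intro!: integrable_pmf_unit_interval expectation_unit_interval sum_nonneg
         integral_nonneg_AE sum_expectation_pmf_le_1 simp: pmf_le_1)
  also have "(\<Sum>a<A. sqrt (kl a)) \<le> sqrt (real A * (\<Sum>a<A. kl a))"
    using sum_sqrt_le_sqrt_card_mult_sum[of "{..<A}" kl]
    by (simp add: kl_def kl_div_nonneg fin supp)
  also have "\<dots> \<le> sqrt (real A * (real n * kl_div (coin (1/2)) (coin (1/2 + \<delta>)) / real (S - 2)))"
    unfolding kl_def
    by (intro real_sqrt_le_mono mult_left_mono sum_kl_div_collect_blanked_planted[OF alg S s k \<delta>]) simp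
  finally show ?thesis by simp
qed

lemma expectation_random_planted_pick_prob_le:
  assumes alg: "valid_alg A (Suc k) alg" and S: "2 < S" and s: "s \<in> {2..<S}" and k: "0 < k"
    and \<delta>: "0 \<le> \<delta>" "\<delta> < 1/2" and A: "0 < A"
  shows "measure_pmf.expectation (Pi_pmf {2..<S} 0 (\<lambda>_. pmf_of_set {..<A}))
      (\<lambda>\<theta>. measure_pmf.expectation (collect (hard_mdp S (planted_bias \<delta> \<theta>)) (Suc k) alg n)
              (pick_prob alg s (\<theta> s)))
     \<le> (1 + 2 * sqrt (real A * (real n * kl_div (coin (1/2)) (coin (1/2 + \<delta>)) / real (S - 2)))) / real A"
    (is "measure_pmf.expectation ?\<Theta> ?h \<le> ?B")
proof -
  let ?U = "pmf_of_set {..<A}"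
  have h: "0 \<le> ?h \<theta>" "?h \<theta> \<le> 1" for \<theta>
    by (rule expectation_unit_interval; rule pick_prob_unit_interval)+
  define R where "R = {2..<S} - {s}"
  have R: "{2..<S} = insert s R" "finite R" "s \<notin> R"
    using s by (auto simp: R_def)
  have \<Theta>: "?\<Theta> = Pi_pmf R 0 (\<lambda>_. ?U) \<bind> (\<lambda>\<theta>. ?U \<bind> (\<lambda>a. return_pmf (\<theta>(s := a))))"
    unfolding R(1) Pi_pmf_insert'[OF R(2,3)] by (rule bind_commute_pmf)
  have resample: "measure_pmf.expectation (?U \<bind> (\<lambda>a. return_pmf (\<theta>(s := a)))) ?h =
      (\<Sum>a<A. ?h (\<theta>(s := a))) / real A" for \<theta>
  proof -
    have "{..<A} \<noteq> {}" using A by auto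
    then show ?thesis
      by (simp add: expectation_bind_pmf[of ?h 1, OF h] integral_pmf_of_set)
  qed
  have "measure_pmf.expectation ?\<Theta> ?h = measure_pmf.expectation (Pi_pmf R 0 (\<lambda>_. ?U))
      (\<lambda>\<theta>. (\<Sum>a<A. ?h (\<theta>(s := a))) / real A)"
    unfolding \<Theta> by (subst expectation_bind_pmf[of ?h 1, OF h]) (simp only: resample)
  also have "\<dots> \<le> measure_pmf.expectation (Pi_pmf R 0 (\<lambda>_. ?U)) (\<lambda>_. ?B)"
  proof (rule integral_mono)
    have "0 \<le> (\<Sum>a<A. ?h (\<theta>(s := a)))" "(\<Sum>a<A. ?h (\<theta>(s := a))) \<le> real A" for \<theta>
      using sum_nonneg[of "{..<A}" "\<lambda>a. ?h (\<theta>(s := a))"] h(1)[of "\<theta>(s := _)"]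
        sum_bounded_above[of "{..<A}" "\<lambda>a. ?h (\<theta>(s := a))" 1] h(2)[of "\<theta>(s := _)"] by simp_all
    then show "integrable (Pi_pmf R 0 (\<lambda>_. ?U)) (\<lambda>\<theta>. (\<Sum>a<A. ?h (\<theta>(s := a))) / real A)"
      using A by (intro integrable_pmf_unit_interval) simp_all
    show "(\<Sum>a<A. ?h (\<theta>(s := a))) / real A \<le> ?B" for \<theta>
      using divide_right_mono[OF sum_pick_prob_planted_le[OF alg S s k \<delta>, of \<theta> n], of "real A"]
      by simp
  qed simp
  finally show ?thesis by simp
qed

lemma exists_planted_low_match:
  assumes alg: "valid_alg A (Suc k) alg" and S: "2 < S" and k: "0 < k"
    and \<delta>: "0 \<le> \<delta>" "\<delta> < 1/2" and A: "0 < A"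
    and b: "(1 + 2 * sqrt (real A * (real n * kl_div (coin (1/2)) (coin (1/2 + \<delta>)) / real (S - 2))))
            / real A \<le> b"
  shows "\<exists>\<theta>. (\<forall>s\<in>{2..<S}. \<theta> s < A) \<and>
    measure_pmf.expectation (alg_output (hard_mdp S (planted_bias \<delta> \<theta>)) (Suc k) alg n) (match_prob S \<theta>) \<le> b"
proof -
  let ?\<Theta> = "Pi_pmf {2..<S} 0 (\<lambda>_. pmf_of_set {..<A})"
  define W where "W \<theta> = measure_pmf.expectation
      (alg_output (hard_mdp S (planted_bias \<delta> \<theta>)) (Suc k) alg n) (match_prob S \<theta>)" for \<theta>
  define h where "h s \<theta> = measure_pmf.expectation
      (collect (hard_mdp S (planted_bias \<delta> \<theta>)) (Suc k) alg n) (pick_prob alg s (\<theta> s))" for s \<theta>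
  have h: "0 \<le> h s \<theta>" "h s \<theta> \<le> 1" for s \<theta>
    unfolding h_def by (rule expectation_unit_interval; rule pick_prob_unit_interval)+
  have "measure_pmf.expectation ?\<Theta> W =
        (\<Sum>s\<in>{2..<S}. measure_pmf.expectation ?\<Theta> (h s)) / real (S - 2)"
    unfolding W_def expectation_match_prob_alg_output[OF S] h_def[symmetric]
    by (simp add: Bochner_Integration.integral_sum[OF integrable_pmf_unit_interval[OF h]])
  also have "\<dots> \<le> (\<Sum>s\<in>{2..<S}. b) / real (S - 2)"
  proof (intro divide_right_mono sum_mono)
    fix s assume "s \<in> {2..<S}"
    from expectation_random_planted_pick_prob_le[OF alg S this k \<delta> A, of n] b
    show "measure_pmf.expectation ?\<Theta> (h s) \<le> b"
      unfolding h_def by linarith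
  qed simp
  also have "\<dots> = b" using S by simp
  finally have EW: "measure_pmf.expectation ?\<Theta> W \<le> b" .
  have "set_pmf (pmf_of_set {..<A}) = {..<A}"
    using A by (intro set_pmf_of_set) auto
  then have supp: "set_pmf ?\<Theta> \<subseteq> PiE_dflt {2..<S} 0 (\<lambda>_. {..<A})"
    using set_Pi_pmf_subset'[of "{2..<S}" 0 "\<lambda>_. pmf_of_set {..<A}"] by (simp add: o_def)
  then have "finite (set_pmf ?\<Theta>)"
    by (rule finite_subset) auto
  then obtain \<theta> where "\<theta> \<in> set_pmf ?\<Theta>" "W \<theta> \<le> measure_pmf.expectation ?\<Theta> W"
    using ex_in_set_pmf_le_expectation by blast
  with supp EW have "(\<forall>s\<in>{2..<S}. \<theta> s < A) \<and> W \<theta> \<le> b"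
    by (force simp: PiE_dflt_def)
  then show ?thesis
    unfolding W_def by blast
qed

lemma kl_budget_le:
  assumes k: "0 < k" and \<epsilon>: "0 < \<epsilon>" "4 * \<epsilon> / real k \<le> 1/4" and S: "4 \<le> S"
    and n: "real n \<le> real (Suc k) ^ 2 * real S * real A / (51200 * \<epsilon> ^ 2)"
  shows "real n * kl_div (coin (1/2)) (coin (1/2 + 4 * \<epsilon> / real k)) / real (S - 2) \<le> real A / 100"
proof -
  let ?K = "kl_div (coin (1/2)) (coin (1/2 + 4 * \<epsilon> / real k))"
  have K: "?K \<le> 64 * \<epsilon>\<^sup>2 / (real k)\<^sup>2"
    using kl_div_coin_half_le[of "4 * \<epsilon> / real k"] \<epsilon> by (simp add: power_divide)
  have "(real (Suc k))\<^sup>2 \<le> (2 * real k)\<^sup>2"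
    using k by (intro power_mono) auto
  then have Suc_k: "(real (Suc k))\<^sup>2 / (real k)\<^sup>2 \<le> 4"
    using k by (simp add: divide_le_eq power_mult_distrib)
  have "real n * ?K \<le> real (Suc k) ^ 2 * real S * real A / (51200 * \<epsilon> ^ 2) * (64 * \<epsilon>\<^sup>2 / (real k)\<^sup>2)"
    by (intro mult_mono[OF n K] kl_div_coin_half_nonneg) (use \<epsilon> k in auto)
  also have "\<dots> = real S * real A / 800 * ((real (Suc k))\<^sup>2 / (real k)\<^sup>2)"
    using \<epsilon> k by (simp add: field_simps power2_eq_square)
  also have "\<dots> \<le> real S * real A / 800 * 4"
    by (intro mult_left_mono Suc_k) simp
  also have "\<dots> \<le> real (S - 2) * real A / 100"
  proof -
    have "real S \<le> 2 * real (S - 2)" using S by (simp add: of_nat_diff)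
    then have "real S * real A \<le> 2 * real (S - 2) * real A" by (rule mult_right_mono) simp
    then show ?thesis by (simp add: mult_ac)
  qed
  finally show ?thesis
    using S by (simp add: divide_le_eq mult.commute)
qed

lemma one_plus_two_sqrt_mult_div_le:
  assumes A: "2 \<le> A" and x: "x \<le> real A / 100"
  shows "(1 + 2 * sqrt (real A * x)) / real A \<le> 7/10"
proof -
  have "real A * x \<le> (real A / 10)\<^sup>2"
    using mult_left_mono[OF x, of "real A"] by (simp add: power2_eq_square)
  then have "sqrt (real A * x) \<le> real A / 10"
    using real_sqrt_le_mono by fastforce
  then have "(1 + 2 * sqrt (real A * x)) / real A \<le> (1 + 2 * (real A / 10)) / real A"
    by (intro divide_right_mono) simp_all
  also have "\<dots> \<le> 7/10"
    using A by (simp add: field_simps)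
  finally show ?thesis .
qed

lemma suboptimal_if_match_prob_less:
  assumes S: "2 < S" and k: "0 < k" and \<epsilon>: "0 < \<epsilon>" "4 * \<epsilon> / real k \<le> 1/2" and A: "0 < A"
    and \<theta>: "\<forall>s\<in>{2..<S}. \<theta> s < A" and match: "match_prob S \<theta> \<pi> < 3/4"
  shows "\<epsilon> \<le> vstar (hard_mdp S (planted_bias (4 * \<epsilon> / real k) \<theta>)) A (Suc k) -
             pol_value (hard_mdp S (planted_bias (4 * \<epsilon> / real k) \<theta>)) (Suc k) \<pi>"
proof -
  have "\<epsilon> \<le> real k * (4 * \<epsilon> / real k) * (1 - match_prob S \<theta> \<pi>)"
    using k \<epsilon> match by simp
  also have "\<dots> \<le> vstar (hard_mdp S (planted_bias (4 * \<epsilon> / real k) \<theta>)) A (Suc k) -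
             pol_value (hard_mdp S (planted_bias (4 * \<epsilon> / real k) \<theta>)) (Suc k) \<pi>"
    using \<theta> \<epsilon> S A by (intro suboptimality_planted) auto
  finally show ?thesis .
qed

lemma hard_mdp_lower_bound:
  assumes H: "2 \<le> H" and A: "2 \<le> A" and \<epsilon>: "0 < \<epsilon>" "\<epsilon> \<le> 1/16" and S: "4 \<le> S"
    and alg: "valid_alg A H alg"
    and n: "real n \<le> real H ^ 2 * real S * real A / (51200 * \<epsilon> ^ 2)"
  shows "\<exists>M. valid_mdp S A H M \<and>
    1/15 \<le> measure_pmf.prob (alg_output M H alg n) {\<pi>. \<epsilon> \<le> vstar M A H - pol_value M H \<pi>}"
proof -
  obtain k where Hk: "H = Suc k" and k: "0 < k"
    using H by (cases H) auto
  define \<delta> where "\<delta> = 4 * \<epsilon> / real k"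
  have "\<delta> \<le> 4 * \<epsilon>"
    using k \<epsilon> by (simp add: \<delta>_def divide_le_eq)
  then have \<delta>: "0 \<le> \<delta>" "\<delta> \<le> 1/4"
    using \<epsilon> by (auto simp: \<delta>_def)
  have alg': "valid_alg A (Suc k) alg"
    using alg by (simp add: Hk)
  have "real n * kl_div (coin (1/2)) (coin (1/2 + \<delta>)) / real (S - 2) \<le> real A / 100"
    unfolding \<delta>_def by (rule kl_budget_le[OF k \<epsilon>(1) _ S]) (use n \<delta> in \<open>simp_all add: \<delta>_def Hk\<close>)
  then have bound: "(1 + 2 * sqrt (real A * (real n * kl_div (coin (1/2)) (coin (1/2 + \<delta>)) /
      real (S - 2)))) / real A \<le> 7/10"
    by (rule one_plus_two_sqrt_mult_div_le[OF A])
  obtain \<theta> where \<theta>: "\<forall>s\<in>{2..<S}. \<theta> s < A" and low_match: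
    "measure_pmf.expectation (alg_output (hard_mdp S (planted_bias \<delta> \<theta>)) (Suc k) alg n)
       (match_prob S \<theta>) \<le> 7/10"
    using exists_planted_low_match[OF alg' _ k \<delta>(1) _ _ bound] S A \<delta> by fastforce
  let ?M = "hard_mdp S (planted_bias \<delta> \<theta>)"
  let ?out = "alg_output ?M (Suc k) alg n"
  have "1 - 7/10 / (3/4) \<le> measure_pmf.prob ?out {\<pi>. match_prob S \<theta> \<pi> < 3/4}"
    using prob_less_ge_1_minus_expectation[of "match_prob S \<theta>" "3/4" ?out]
      low_match match_prob_nonneg match_prob_le_1 S by simp
  also have "\<dots> \<le> measure_pmf.prob ?out {\<pi>. \<epsilon> \<le> vstar ?M A (Suc k) - pol_value ?M (Suc k) \<pi>}"
    using suboptimal_if_match_prob_less[OF _ k \<epsilon>(1) _ _ \<theta>] S A \<delta>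
    by (intro measure_pmf.finite_measure_mono) (auto simp: \<delta>_def)
  finally show ?thesis
    unfolding Hk using valid_mdp_hard_mdp S by (intro exI[of _ ?M]) auto
qed

theorem theoremE1:
  shows "\<exists>c1 c p :: real. c1 > 0 \<and> c > 0 \<and> p > 0 \<and>
    (\<forall>(H::nat) (A::nat) (S::nat) (\<epsilon>::real) (alg::algorithm) (n::nat).
       H \<ge> 2 \<longrightarrow> A \<ge> 2 \<longrightarrow> 0 < \<epsilon> \<longrightarrow> \<epsilon> < 1 / (48 * sqrt 8) \<longrightarrow>
       real S \<ge> c1 \<longrightarrow> valid_alg A H alg \<longrightarrow>
       real n \<le> c * real H ^ 2 * real S * real A / \<epsilon> ^ 2 \<longrightarrow>
       (\<exists>M. valid_mdp S A H M \<and>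
          measure_pmf.prob (alg_output M H alg n)
            {\<pi>. vstar M A H - pol_value M H \<pi> \<ge> \<epsilon>} \<ge> p))"
proof (rule exI[of _ 4], rule exI[of _ "1/51200"], rule exI[of _ "1/15"], intro conjI allI impI)
  fix H A S :: nat and \<epsilon> :: real and alg n
  assume H: "2 \<le> H" and A: "2 \<le> A" and \<epsilon>: "0 < \<epsilon>" "\<epsilon> < 1 / (48 * sqrt 8)"
    and S: "4 \<le> real S" and alg: "valid_alg A H alg"
    and n: "real n \<le> 1/51200 * real H ^ 2 * real S * real A / \<epsilon> ^ 2"
  have "1 \<le> sqrt (8 :: real)"
    by (rule real_le_rsqrt) simp
  then have "1 / (48 * sqrt 8) \<le> (1/48 :: real)"
    by (intro divide_left_mono) auto
  with \<epsilon> have "\<epsilon> \<le> 1/16" by linarith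
  then show "\<exists>M. valid_mdp S A H M \<and>
      measure_pmf.prob (alg_output M H alg n) {\<pi>. vstar M A H - pol_value M H \<pi> \<ge> \<epsilon>} \<ge> 1/15"
    using hard_mdp_lower_bound[OF H A \<epsilon>(1) _ _ alg] S n by simp
qed simp_all

end
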